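(* Let $P$ be a tree of height $\omega$ with bottom element $\bot$ in which every node has two incompatible extensions. Let $B$ be a Kripke set (in a Kripke structure over $P$ containing $\hat P$) and $\sigma\in P$. Then $\sigma\Vdash$ "$B$ is a branch through $\hat P$" if and only if $\sigma\Vdash 1_\bot\in B$ and for every $\tau\ge\sigma$ the set $\mathrm{ext}_\tau(B)$ is a branch through the tree $P_{\ge\tau}$.
   Context: Kripke semantics for set theory is standard. For $\sigma\in P$, $1_\sigma$ is the Kripke set with $(1_\sigma)_\tau=\emptyset$ if $\tau\le\sigma$ and $(1_\sigma)_\tau=\{\emptyset\}$ if $\sigma<\tau$ or $\sigma\perp\tau$. $\hat P$ is the Kripke set with $\hat P_\sigma=\{1_\rho:\rho\in P\}$ at every node, identity transitions. Internally, $B$ is a branch through $\hat P$ if $B\subseteq\hat P$ and (1) $\alpha\supseteq\beta\in B\to\alpha\in B$ for $\alpha\in\hat P$; (2) $\forall\alpha,\beta\in B\,(\alpha\subseteq\beta\vee\beta\subseteq\alpha)$; (3) $\forall\gamma\in\hat P\,((\forall\beta\in B\,(\gamma\subseteq\beta\vee\beta\subseteq\gamma))\to\gamma\in B)$. For $\sigma\Vdash U\subseteq\hat P$ and $\tau\ge\sigma$, $\mathrm{ext}_\tau(U)=\{\rho\ge\tau:\tau\Vdash 1_\rho\in U\}$. $P_{\ge\tau}=\{\rho\in P:\rho\ge\tau\}$. A branch through a tree (classically) is a nonempty, linearly ordered, downward closed subset with no maximal element. *)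

theory Defs
  imports Main
begin

text \<open>The poset P is the whole type 'p (of class order_bot; its least element
  bot is the bottom node of the tree).\<close>

definition incompat :: "'p::order \<Rightarrow> 'p \<Rightarrow> bool" where
  "incompat p q \<longleftrightarrow> \<not> (\<exists>r. p \<le> r \<and> q \<le> r)"

definition omega_tree :: "'p::order set \<Rightarrow> bool" where
  "omega_tree P \<longleftrightarrow>
     (\<forall>p\<in>P. finite {q\<in>P. q \<le> p} \<and> (\<forall>q\<in>P. \<forall>r\<in>P. q \<le> p \<longrightarrow> r \<le> p \<longrightarrow> q \<le> r \<or> r \<le> q))
     \<and> (\<forall>n::nat. \<exists>p\<in>P. card {q\<in>P. q < p} = n)"

definition splitting :: "'p::order set \<Rightarrow> bool" where
  "splitting P \<longleftrightarrow> (\<forall>p\<in>P. \<exists>q\<in>P. \<exists>r\<in>P. p \<le> q \<and> p \<le> r \<and> incompat q r)"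

definition tree_branch :: "'p::order set \<Rightarrow> 'p set \<Rightarrow> bool" where
  "tree_branch T X \<longleftrightarrow> X \<noteq> {} \<and> X \<subseteq> T
     \<and> (\<forall>x\<in>X. \<forall>y\<in>X. x \<le> y \<or> y \<le> x)
     \<and> (\<forall>x\<in>X. \<forall>y\<in>T. y \<le> x \<longrightarrow> y \<in> X)
     \<and> (\<forall>x\<in>X. \<exists>y\<in>X. x < y)"

text \<open>A Kripke structure over P: domains D \<sigma>, transition maps tr \<sigma> \<tau> (for \<sigma> \<le> \<tau>),
  membership relations mem \<sigma>; equality is interpreted as identity in each domain.
  As is standard for Kripke models of set theory, extensionality is forced.\<close>
definition kripke_structure ::
  "('p::order \<Rightarrow> 'a set) \<Rightarrow> ('p \<Rightarrow> 'p \<Rightarrow> 'a \<Rightarrow> 'a) \<Rightarrow> ('p \<Rightarrow> 'a \<Rightarrow> 'a \<Rightarrow> bool) \<Rightarrow> bool" where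
  "kripke_structure D tr mem \<longleftrightarrow>
     (\<forall>\<sigma> \<tau> x. \<sigma> \<le> \<tau> \<longrightarrow> x \<in> D \<sigma> \<longrightarrow> tr \<sigma> \<tau> x \<in> D \<tau>)
   \<and> (\<forall>\<sigma> x. x \<in> D \<sigma> \<longrightarrow> tr \<sigma> \<sigma> x = x)
   \<and> (\<forall>\<sigma> \<tau> \<rho> x. \<sigma> \<le> \<tau> \<longrightarrow> \<tau> \<le> \<rho> \<longrightarrow> x \<in> D \<sigma> \<longrightarrow> tr \<tau> \<rho> (tr \<sigma> \<tau> x) = tr \<sigma> \<rho> x)
   \<and> (\<forall>\<sigma> x y. mem \<sigma> x y \<longrightarrow> x \<in> D \<sigma> \<and> y \<in> D \<sigma>)
   \<and> (\<forall>\<sigma> \<tau> x y. \<sigma> \<le> \<tau> \<longrightarrow> mem \<sigma> x y \<longrightarrow> mem \<tau> (tr \<sigma> \<tau> x) (tr \<sigma> \<tau> y))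
   \<and> (\<forall>\<sigma> x y. x \<in> D \<sigma> \<longrightarrow> y \<in> D \<sigma> \<longrightarrow>
        (\<forall>\<tau>\<ge>\<sigma>. \<forall>z\<in>D \<tau>. mem \<tau> z (tr \<sigma> \<tau> x) \<longleftrightarrow> mem \<tau> z (tr \<sigma> \<tau> y)) \<longrightarrow> x = y)"

datatype fm =
    FMem nat nat
  | FEq nat nat
  | FFalse
  | FAnd fm fm
  | FOr fm fm
  | FImp fm fm
  | FAll nat fm
  | FEx nat fm

primrec forces ::
  "('p::order \<Rightarrow> 'a set) \<Rightarrow> ('p \<Rightarrow> 'p \<Rightarrow> 'a \<Rightarrow> 'a) \<Rightarrow> ('p \<Rightarrow> 'a \<Rightarrow> 'a \<Rightarrow> bool)
   \<Rightarrow> 'p \<Rightarrow> (nat \<Rightarrow> 'a) \<Rightarrow> fm \<Rightarrow> bool" where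
  "forces D tr mem \<sigma> v (FMem i j) = mem \<sigma> (v i) (v j)"
| "forces D tr mem \<sigma> v (FEq i j) = (v i = v j)"
| "forces D tr mem \<sigma> v FFalse = False"
| "forces D tr mem \<sigma> v (FAnd \<phi> \<psi>) = (forces D tr mem \<sigma> v \<phi> \<and> forces D tr mem \<sigma> v \<psi>)"
| "forces D tr mem \<sigma> v (FOr \<phi> \<psi>) = (forces D tr mem \<sigma> v \<phi> \<or> forces D tr mem \<sigma> v \<psi>)"
| "forces D tr mem \<sigma> v (FImp \<phi> \<psi>) =
     (\<forall>\<tau>\<ge>\<sigma>. forces D tr mem \<tau> (tr \<sigma> \<tau> \<circ> v) \<phi> \<longrightarrow> forces D tr mem \<tau> (tr \<sigma> \<tau> \<circ> v) \<psi>)"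
| "forces D tr mem \<sigma> v (FAll i \<phi>) =
     (\<forall>\<tau>\<ge>\<sigma>. \<forall>x\<in>D \<tau>. forces D tr mem \<tau> ((tr \<sigma> \<tau> \<circ> v)(i := x)) \<phi>)"
| "forces D tr mem \<sigma> v (FEx i \<phi>) = (\<exists>x\<in>D \<sigma>. forces D tr mem \<sigma> (v(i := x)) \<phi>)"

text \<open>emp is the empty Kripke set, one \<rho> is 1_\<rho>, hatP is P-hat (global elements,
  living at the bottom node and transported along tr).\<close>
definition contains_hatP ::
  "('p::order_bot \<Rightarrow> 'a set) \<Rightarrow> ('p \<Rightarrow> 'p \<Rightarrow> 'a \<Rightarrow> 'a) \<Rightarrow> ('p \<Rightarrow> 'a \<Rightarrow> 'a \<Rightarrow> bool)
   \<Rightarrow> 'a \<Rightarrow> ('p \<Rightarrow> 'a) \<Rightarrow> 'a \<Rightarrow> bool" where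
  "contains_hatP D tr mem emp one hatP \<longleftrightarrow>
     emp \<in> D bot \<and> hatP \<in> D bot \<and> (\<forall>\<rho>. one \<rho> \<in> D bot)
   \<and> (\<forall>\<tau>. \<forall>z\<in>D \<tau>. \<not> mem \<tau> z (tr bot \<tau> emp))
   \<and> (\<forall>\<rho> \<tau>. \<forall>z\<in>D \<tau>. mem \<tau> z (tr bot \<tau> (one \<rho>)) \<longleftrightarrow>
         ((\<rho> < \<tau> \<or> incompat \<rho> \<tau>) \<and> z = tr bot \<tau> emp))
   \<and> (\<forall>\<tau>. \<forall>z\<in>D \<tau>. mem \<tau> z (tr bot \<tau> hatP) \<longleftrightarrow> (\<exists>\<rho>. z = tr bot \<tau> (one \<rho>)))"

text \<open>Variable 0 stands for B, variable 1 for P-hat; variables 2,3,4 are bound.\<close>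
definition sub_fm :: "nat \<Rightarrow> nat \<Rightarrow> fm" where
  "sub_fm x y = FAll 4 (FImp (FMem 4 x) (FMem 4 y))"

definition B_sub_hatP_fm :: fm where
  "B_sub_hatP_fm = FAll 2 (FImp (FMem 2 0) (FMem 2 1))"

definition branch_fm :: fm where
  "branch_fm =
     FAnd B_sub_hatP_fm
    (FAnd (FAll 2 (FImp (FMem 2 1) (FAll 3 (FImp (FMem 3 0) (FImp (sub_fm 3 2) (FMem 2 0))))))
    (FAnd (FAll 2 (FImp (FMem 2 0) (FAll 3 (FImp (FMem 3 0) (FOr (sub_fm 2 3) (sub_fm 3 2))))))
          (FAll 2 (FImp (FMem 2 1)
             (FImp (FAll 3 (FImp (FMem 3 0) (FOr (sub_fm 2 3) (sub_fm 3 2)))) (FMem 2 0))))))"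

definition ext_at ::
  "('p::order_bot \<Rightarrow> 'p \<Rightarrow> 'a \<Rightarrow> 'a) \<Rightarrow> ('p \<Rightarrow> 'a \<Rightarrow> 'a \<Rightarrow> bool) \<Rightarrow> ('p \<Rightarrow> 'a)
   \<Rightarrow> 'p \<Rightarrow> 'a \<Rightarrow> 'p \<Rightarrow> 'p set" where
  "ext_at tr mem one \<sigma> U \<tau> = {\<rho>. \<tau> \<le> \<rho> \<and> mem \<tau> (tr bot \<tau> (one \<rho>)) (tr \<sigma> \<tau> U)}"

end

theory Submission
  imports Defs
begin

text \<open>
  Once \<open>B \<subseteq> P\<close>-hat is forced, quantifiers over \<open>B\<close> and over \<open>P\<close>-hat become quantifiers over
  nodes: at stage \<open>\<tau>\<close> the set \<open>B\<close> is described by the nodes \<open>\<rho>\<close> with \<open>1\<^sub>\<rho> \<in> B\<close>, and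
  \<open>\<tau> \<Vdash> 1\<^sub>a \<subseteq> 1\<^sub>b\<close> just says that \<open>\<tau> \<le> b\<close> implies \<open>b \<le> a\<close>. The three clauses of
  "branch" then say that at every stage this set is downward closed, linearly ordered, and
  contains every node that stays comparable with all of its members at all later stages.
  The first two are branch conditions outright. Maximality gives \<open>1\<^sub>\<bottom> \<in> B\<close> and the absence
  of a maximal element: if a cover \<open>c\<close> of a member \<open>x\<close> is missing, some later member \<open>e\<close> is
  incomparable with \<open>c\<close>; the cover of \<open>x\<close> below \<open>e\<close> then enters at a stage below \<open>x\<close>, and any
  later member incomparable with it would meet it at a common stage below \<open>x\<close>, so it is
  comparable with everything and hence already a member. Conversely, a branch with finite
  sets of predecessors contains every node comparable with all of its members.
\<close>

lemma omega_tree_linear_below: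
  assumes "omega_tree (UNIV :: 'p::order set)" and "q \<le> p" and "r \<le> p"
  shows "q \<le> r \<or> r \<le> (q::'p)"
  using assms unfolding omega_tree_def by blast

lemma omega_tree_finite_below:
  assumes "omega_tree (UNIV :: 'p::order set)"
  shows "finite {q. q \<le> (p::'p)}"
  using assms unfolding omega_tree_def by simp

lemma splitting_no_maximal:
  assumes "splitting (UNIV :: 'p::order set)"
  shows "\<exists>q. (p::'p) < q"
proof -
  obtain q r :: 'p where "p \<le> q" "p \<le> r" "incompat q r"
    using assms unfolding splitting_def by blast
  then have "p \<noteq> q \<or> p \<noteq> r" unfolding incompat_def by blast
  with \<open>p \<le> q\<close> \<open>p \<le> r\<close> show ?thesis by (auto simp: order.order_iff_strict)
qed

lemma not_le_iff_less_or_incompat: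
  fixes \<rho> \<tau> :: "'p::order"
  assumes linear_below: "\<And>p q r :: 'p. q \<le> p \<Longrightarrow> r \<le> p \<Longrightarrow> q \<le> r \<or> r \<le> q"
  shows "\<not> \<tau> \<le> \<rho> \<longleftrightarrow> \<rho> < \<tau> \<or> incompat \<rho> \<tau>"
proof
  assume "\<not> \<tau> \<le> \<rho>"
  then show "\<rho> < \<tau> \<or> incompat \<rho> \<tau>"
    unfolding incompat_def using linear_below by (metis order.not_eq_order_implies_strict order.trans)
next
  assume "\<rho> < \<tau> \<or> incompat \<rho> \<tau>"
  then show "\<not> \<tau> \<le> \<rho>"
    unfolding incompat_def by (metis order.refl order.strict_iff_not)
qed

lemma finite_below_obtain_cover:
  fixes p e :: "'p::order"
  assumes "finite {q. q \<le> e}" and "p < e"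
  obtains c where "p < c" "c \<le> e" "\<And>z. p < z \<Longrightarrow> z \<le> c \<Longrightarrow> z = c"
proof -
  let ?A = "{z. p < z \<and> z \<le> e}"
  have "finite ?A" by (rule finite_subset[OF _ assms(1)]) auto
  moreover have "?A \<noteq> {}" using assms(2) by auto
  ultimately obtain c where c: "c \<in> ?A" and min: "\<forall>z\<in>?A. z \<le> c \<longrightarrow> c = z"
    using finite_has_minimal by blast
  show thesis
  proof
    show "p < c" "c \<le> e" using c by simp_all
    show "z = c" if "p < z" "z \<le> c" for z
    proof -
      have "z \<le> e" using that(2) c by (auto intro: order.trans)
      then have "z \<in> ?A" using that(1) by simp
      then show ?thesis using min that(2) by blast
    qed
  qed
qed

text \<open>\<open>\<tau> \<Vdash> 1\<^sub>a \<subseteq> 1\<^sub>b\<close> holds iff \<open>sub_one_at \<tau> a b\<close> (lemma \<open>forces_sub_fm_one\<close>).\<close>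

definition sub_one_at :: "'p::order \<Rightarrow> 'p \<Rightarrow> 'p \<Rightarrow> bool" where
  "sub_one_at \<tau> a b \<longleftrightarrow> (\<tau> \<le> b \<longrightarrow> b \<le> a)"

text \<open>\<open>M \<tau> \<rho>\<close> stands for \<open>\<tau> \<Vdash> 1\<^sub>\<rho> \<in> B\<close>; \<open>invisible\<close> reflects that all \<open>1\<^sub>\<rho>\<close> with
  \<open>\<tau> \<not>\<le> \<rho>\<close> are the same set from stage \<open>\<tau>\<close> on.\<close>

locale stage_family =
  fixes \<sigma> :: "'p::order_bot" and M :: "'p \<Rightarrow> 'p \<Rightarrow> bool"
  assumes linear_below: "\<And>p q r :: 'p. q \<le> p \<Longrightarrow> r \<le> p \<Longrightarrow> q \<le> r \<or> r \<le> q"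
    and finite_below: "\<And>p :: 'p. finite {q. q \<le> p}"
    and no_maximal: "\<And>p :: 'p. \<exists>q. p < q"
    and persistent: "\<And>\<tau> \<tau>' a. \<sigma> \<le> \<tau> \<Longrightarrow> \<tau> \<le> \<tau>' \<Longrightarrow> M \<tau> a \<Longrightarrow> M \<tau>' a"
    and invisible: "\<And>\<tau> a c. \<sigma> \<le> \<tau> \<Longrightarrow> \<not> \<tau> \<le> a \<Longrightarrow> \<not> \<tau> \<le> c \<Longrightarrow> M \<tau> a \<longleftrightarrow> M \<tau> c"
begin

definition branch_down_closed :: bool where
  "branch_down_closed \<longleftrightarrow> (\<forall>\<tau>\<ge>\<sigma>. \<forall>a c. M \<tau> c \<longrightarrow> sub_one_at \<tau> c a \<longrightarrow> M \<tau> a)"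

definition branch_linear :: bool where
  "branch_linear \<longleftrightarrow> (\<forall>\<tau>\<ge>\<sigma>. \<forall>a c. M \<tau> a \<longrightarrow> M \<tau> c \<longrightarrow> sub_one_at \<tau> a c \<or> sub_one_at \<tau> c a)"

definition comparable_later :: "'p \<Rightarrow> 'p \<Rightarrow> bool" where
  "comparable_later \<tau> a \<longleftrightarrow> (\<forall>\<tau>'\<ge>\<tau>. \<forall>c. M \<tau>' c \<longrightarrow> sub_one_at \<tau>' a c \<or> sub_one_at \<tau>' c a)"

definition branch_maximal :: bool where
  "branch_maximal \<longleftrightarrow> (\<forall>\<tau>\<ge>\<sigma>. \<forall>a. comparable_later \<tau> a \<longrightarrow> M \<tau> a)"

lemma branch_down_closed_iff:
  "branch_down_closed \<longleftrightarrow> (\<forall>\<tau>\<ge>\<sigma>. \<forall>a c. M \<tau> c \<longrightarrow> (\<forall>\<tau>'\<ge>\<tau>. sub_one_at \<tau>' c a \<longrightarrow> M \<tau>' a))"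
  unfolding branch_down_closed_def by (meson order.refl order.trans persistent)

lemma branch_linear_iff: "branch_linear \<longleftrightarrow> (\<forall>\<tau>\<ge>\<sigma>. \<forall>a. M \<tau> a \<longrightarrow> comparable_later \<tau> a)"
  unfolding branch_linear_def comparable_later_def by (meson order.refl order.trans persistent)

lemma down_closedD: "branch_down_closed \<Longrightarrow> \<sigma> \<le> \<tau> \<Longrightarrow> M \<tau> c \<Longrightarrow> a \<le> c \<Longrightarrow> M \<tau> a"
  unfolding branch_down_closed_def sub_one_at_def by blast

lemma linearD:
  "branch_linear \<Longrightarrow> \<sigma> \<le> \<tau> \<Longrightarrow> M \<tau> a \<Longrightarrow> M \<tau> c \<Longrightarrow> \<tau> \<le> a \<Longrightarrow> \<tau> \<le> c \<Longrightarrow> a \<le> c \<or> c \<le> a"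
  unfolding branch_linear_def sub_one_at_def by blast

lemma not_comparable_later:
  "\<not> comparable_later \<tau> a \<longleftrightarrow>
     (\<exists>\<tau>'\<ge>\<tau>. \<exists>c. M \<tau>' c \<and> \<tau>' \<le> a \<and> \<tau>' \<le> c \<and> \<not> a \<le> c \<and> \<not> c \<le> a)"
  unfolding comparable_later_def sub_one_at_def by blast

lemma comparable_later_bot: "comparable_later \<tau> bot"
  unfolding comparable_later_def sub_one_at_def by simp

lemma comparable_later_self: "comparable_later \<tau> \<tau>"
  unfolding comparable_later_def sub_one_at_def by (meson order.trans order.antisym)

lemma incomparable_above_cover:
  assumes lin: branch_linear and "\<sigma> \<le> \<tau>" "\<tau> \<le> \<tau>'" "M \<tau> x"
    and cover: "x < c" "\<And>z. x < z \<Longrightarrow> z \<le> c \<Longrightarrow> z = c"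
    and e: "M \<tau>' e" "\<tau>' \<le> c" "\<tau>' \<le> e" "\<not> c \<le> e" "\<not> e \<le> c"
  shows "\<tau>' \<le> x" and "x < e"
proof -
  have "\<tau>' \<le> x \<or> x \<le> \<tau>'" using linear_below[OF e(2)] cover(1) by (simp add: less_imp_le)
  then show tx: "\<tau>' \<le> x" using cover e(2-4) by (metis order.order_iff_strict)
  have "M \<tau>' x" using persistent assms(2,3,4) .
  then have "x \<le> e \<or> e \<le> x" using linearD[OF lin _ _ e(1) tx e(3)] assms(2,3) order.trans by blast
  then show "x < e" using cover(1) e(5) by (metis order.order_iff_strict order.trans less_imp_le)
qed

text \<open>A later member incomparable with \<open>c\<close> would be a member together with \<open>c\<close> at a common
  stage below \<open>x\<close>, contradicting linearity there.\<close>
lemma cover_member_at_early_stage: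
  assumes lin: branch_linear and max: branch_maximal and "\<sigma> \<le> \<tau>" "M \<tau> x"
    and cover: "x < c" "\<And>z. x < z \<Longrightarrow> z \<le> c \<Longrightarrow> z = c"
    and c: "\<tau> \<le> \<tau>'" "\<tau>' \<le> x" "M \<tau>' c"
  shows "M \<tau> c"
proof -
  have "comparable_later \<tau> c"
  proof (rule ccontr)
    assume "\<not> comparable_later \<tau> c"
    then obtain \<tau>'' e where e: "\<tau> \<le> \<tau>''" "M \<tau>'' e" "\<tau>'' \<le> c" "\<tau>'' \<le> e" "\<not> c \<le> e" "\<not> e \<le> c"
      unfolding not_comparable_later by blast
    have "\<tau>'' \<le> x" "x < e"
      using incomparable_above_cover[OF lin \<open>\<sigma> \<le> \<tau>\<close> e(1) \<open>M \<tau> x\<close> cover e(2-6)] by auto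
    obtain \<tau>\<^sub>0 where "\<tau>' \<le> \<tau>\<^sub>0" "\<tau>'' \<le> \<tau>\<^sub>0" "\<tau>\<^sub>0 \<le> x"
      using linear_below[OF c(2) \<open>\<tau>'' \<le> x\<close>] c(2) \<open>\<tau>'' \<le> x\<close> by blast
    moreover have "\<sigma> \<le> \<tau>'" "\<sigma> \<le> \<tau>''" using \<open>\<sigma> \<le> \<tau>\<close> c(1) e(1) order.trans by blast+
    ultimately have "M \<tau>\<^sub>0 c" "M \<tau>\<^sub>0 e" "\<sigma> \<le> \<tau>\<^sub>0" using persistent c(3) e(2) order.trans by blast+
    moreover have "\<tau>\<^sub>0 \<le> c" "\<tau>\<^sub>0 \<le> e"
      using \<open>\<tau>\<^sub>0 \<le> x\<close> cover(1) \<open>x < e\<close> by (meson less_imp_le order.trans)+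
    ultimately show False using linearD[OF lin] e(5,6) by blast
  qed
  then show ?thesis using max \<open>\<sigma> \<le> \<tau>\<close> unfolding branch_maximal_def by blast
qed

lemma stage_has_successor:
  assumes down: branch_down_closed and lin: branch_linear and max: branch_maximal
    and "\<sigma> \<le> \<tau>" "\<tau> \<le> x" "M \<tau> x"
  obtains y where "x < y" "M \<tau> y"
proof -
  obtain e\<^sub>0 where "x < e\<^sub>0" using no_maximal by blast
  then obtain c where cover: "x < c" "\<And>z. x < z \<Longrightarrow> z \<le> c \<Longrightarrow> z = c"
    using finite_below_obtain_cover[OF finite_below] by metis
  show thesis
  proof (cases "comparable_later \<tau> c")
    case True
    then show thesis using that cover(1) max \<open>\<sigma> \<le> \<tau>\<close> unfolding branch_maximal_def by blast
  next
    case False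
    then obtain \<tau>' e where e: "\<tau> \<le> \<tau>'" "M \<tau>' e" "\<tau>' \<le> c" "\<tau>' \<le> e" "\<not> c \<le> e" "\<not> e \<le> c"
      unfolding not_comparable_later by blast
    have "\<tau>' \<le> x" "x < e"
      using incomparable_above_cover[OF lin \<open>\<sigma> \<le> \<tau>\<close> e(1) \<open>M \<tau> x\<close> cover e(2-6)] by auto
    then obtain c' where cover': "x < c'" "c' \<le> e" "\<And>z. x < z \<Longrightarrow> z \<le> c' \<Longrightarrow> z = c'"
      using finite_below_obtain_cover[OF finite_below] by metis
    have "\<sigma> \<le> \<tau>'" using \<open>\<sigma> \<le> \<tau>\<close> e(1) by (rule order.trans)
    then have "M \<tau>' c'" using down_closedD[OF down _ e(2) cover'(2)] by blast
    then have "M \<tau> c'"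
      using cover_member_at_early_stage[OF lin max \<open>\<sigma> \<le> \<tau>\<close> \<open>M \<tau> x\<close> cover'(1) cover'(3)]
        e(1) \<open>\<tau>' \<le> x\<close> by blast
    then show thesis using that cover'(1) by blast
  qed
qed

lemma stage_tree_branch:
  assumes down: branch_down_closed and lin: branch_linear and max: branch_maximal and "\<sigma> \<le> \<tau>"
  shows "tree_branch {\<rho>. \<tau> \<le> \<rho>} {\<rho>. \<tau> \<le> \<rho> \<and> M \<tau> \<rho>}"
  unfolding tree_branch_def
proof (intro conjI ballI)
  have "M \<tau> \<tau>" using max comparable_later_self \<open>\<sigma> \<le> \<tau>\<close> unfolding branch_maximal_def by blast
  then show "{\<rho>. \<tau> \<le> \<rho> \<and> M \<tau> \<rho>} \<noteq> {}" by blast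
  fix x assume x: "x \<in> {\<rho>. \<tau> \<le> \<rho> \<and> M \<tau> \<rho>}"
  show "x \<le> y \<or> y \<le> x" if "y \<in> {\<rho>. \<tau> \<le> \<rho> \<and> M \<tau> \<rho>}" for y
    using linearD[OF lin \<open>\<sigma> \<le> \<tau>\<close>] x that by blast
  show "y \<le> x \<longrightarrow> y \<in> {\<rho>. \<tau> \<le> \<rho> \<and> M \<tau> \<rho>}" if "y \<in> {\<rho>. \<tau> \<le> \<rho>}" for y
    using down_closedD[OF down \<open>\<sigma> \<le> \<tau>\<close>] x that by blast
  obtain y where "x < y" "M \<tau> y"
    using stage_has_successor[OF down lin max \<open>\<sigma> \<le> \<tau>\<close>] x by blast
  moreover have "\<tau> \<le> y" using x \<open>x < y\<close> by (auto intro: order.trans less_imp_le)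
  ultimately show "\<exists>y\<in>{\<rho>. \<tau> \<le> \<rho> \<and> M \<tau> \<rho>}. x < y" by blast
qed (auto)

lemma member_if_not_above:
  assumes "M \<sigma> bot" "\<sigma> \<le> \<tau>" "\<not> \<tau> \<le> a"
  shows "M \<tau> a"
proof -
  have "\<not> \<tau> \<le> bot" using assms(3) bot_least order.trans by blast
  then show ?thesis using invisible persistent assms by (metis order.refl)
qed

lemma conditions_if_stage_branches:
  assumes bot: "M \<sigma> bot" and branch: "\<And>\<tau>. \<sigma> \<le> \<tau> \<Longrightarrow> tree_branch {\<rho>. \<tau> \<le> \<rho>} {\<rho>. \<tau> \<le> \<rho> \<and> M \<tau> \<rho>}"
  shows branch_down_closed and branch_linear and branch_maximal
proof -
  have lin: "a \<le> c \<or> c \<le> a" if "\<sigma> \<le> \<tau>" "\<tau> \<le> a" "M \<tau> a" "\<tau> \<le> c" "M \<tau> c" for \<tau> a c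
    using branch[OF that(1)] that(2-5) unfolding tree_branch_def by blast
  have down: "M \<tau> a" if "\<sigma> \<le> \<tau>" "\<tau> \<le> a" "a \<le> c" "M \<tau> c" for \<tau> a c
  proof -
    have "\<tau> \<le> c" using that(2,3) by (rule order.trans)
    then show ?thesis using branch[OF that(1)] that(2-4) unfolding tree_branch_def by blast
  qed
  show branch_down_closed
    unfolding branch_down_closed_def sub_one_at_def
    using down member_if_not_above[OF bot] by blast
  show branch_linear
    unfolding branch_linear_def sub_one_at_def using lin by blast
  show branch_maximal
    unfolding branch_maximal_def
  proof (intro allI impI)
    fix \<tau> a assume "\<sigma> \<le> \<tau>" and comp: "comparable_later \<tau> a"
    show "M \<tau> a"
    proof (rule ccontr)
      assume "\<not> M \<tau> a"
      then have "\<tau> \<le> a" using member_if_not_above[OF bot \<open>\<sigma> \<le> \<tau>\<close>] by blast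
      let ?E = "{\<rho>. \<tau> \<le> \<rho> \<and> M \<tau> \<rho>}"
      have E: "tree_branch {\<rho>. \<tau> \<le> \<rho>} ?E" using branch \<open>\<sigma> \<le> \<tau>\<close> .
      obtain x where "\<tau> \<le> x" "M \<tau> x" using E unfolding tree_branch_def by blast
      then have "M \<tau> \<tau>" using down[OF \<open>\<sigma> \<le> \<tau>\<close> order.refl] by blast
      then have "{\<rho> \<in> ?E. \<rho> \<le> a} \<noteq> {}" using \<open>\<tau> \<le> a\<close> by blast
      moreover have "finite {\<rho> \<in> ?E. \<rho> \<le> a}" using finite_below[of a] by (rule finite_subset[rotated]) auto
      ultimately obtain m where m: "m \<in> ?E" "m \<le> a" and m_max: "\<And>\<rho>. \<rho> \<in> ?E \<Longrightarrow> \<rho> \<le> a \<Longrightarrow> m \<le> \<rho> \<Longrightarrow> m = \<rho>"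
        using finite_has_maximal[of "{\<rho> \<in> ?E. \<rho> \<le> a}"] by blast
      obtain d where d: "d \<in> ?E" "m < d" using E m(1) unfolding tree_branch_def by blast
      have "d \<le> a \<or> a \<le> d"
        using comp d(1) \<open>\<tau> \<le> a\<close> unfolding comparable_later_def sub_one_at_def by blast
      then show False
      proof
        assume "d \<le> a"
        then show False using m_max[OF d(1)] d(2) by (simp add: less_imp_le)
      next
        assume "a \<le> d"
        then have "a \<in> ?E" using E d(1) \<open>\<tau> \<le> a\<close> unfolding tree_branch_def by blast
        then show False using \<open>\<not> M \<tau> a\<close> by blast
      qed
    qed
  qed
qed

theorem branch_conditions_iff_stage_branches:
  "branch_down_closed \<and> branch_linear \<and> branch_maximal \<longleftrightarrow>
     M \<sigma> bot \<and> (\<forall>\<tau>\<ge>\<sigma>. tree_branch {\<rho>. \<tau> \<le> \<rho>} {\<rho>. \<tau> \<le> \<rho> \<and> M \<tau> \<rho>})"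
  using stage_tree_branch conditions_if_stage_branches comparable_later_bot
  unfolding branch_maximal_def by blast

end

locale kripke_hatP =
  fixes D :: "'p::order_bot \<Rightarrow> 'a set" and tr :: "'p \<Rightarrow> 'p \<Rightarrow> 'a \<Rightarrow> 'a"
    and mem :: "'p \<Rightarrow> 'a \<Rightarrow> 'a \<Rightarrow> bool" and emp :: 'a and one :: "'p \<Rightarrow> 'a" and hatP :: 'a
  assumes kripke: "kripke_structure D tr mem"
    and hatP: "contains_hatP D tr mem emp one hatP"
    and linear_below: "\<And>p q r :: 'p. q \<le> p \<Longrightarrow> r \<le> p \<Longrightarrow> q \<le> r \<or> r \<le> q"
begin

abbreviation forced :: "'p \<Rightarrow> (nat \<Rightarrow> 'a) \<Rightarrow> fm \<Rightarrow> bool" where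
  "forced \<equiv> forces D tr mem"

abbreviation one_at :: "'p \<Rightarrow> 'p \<Rightarrow> 'a" where
  "one_at \<tau> \<rho> \<equiv> tr bot \<tau> (one \<rho>)"

lemma tr_in_D [simp]: "\<sigma> \<le> \<tau> \<Longrightarrow> x \<in> D \<sigma> \<Longrightarrow> tr \<sigma> \<tau> x \<in> D \<tau>"
  using kripke unfolding kripke_structure_def by (elim conjE) blast

lemma tr_refl [simp]: "x \<in> D \<sigma> \<Longrightarrow> tr \<sigma> \<sigma> x = x"
  using kripke unfolding kripke_structure_def by (elim conjE) blast

lemma tr_tr [simp]: "\<sigma> \<le> \<tau> \<Longrightarrow> \<tau> \<le> \<rho> \<Longrightarrow> x \<in> D \<sigma> \<Longrightarrow> tr \<tau> \<rho> (tr \<sigma> \<tau> x) = tr \<sigma> \<rho> x"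
  using kripke unfolding kripke_structure_def by (elim conjE) blast

lemma mem_in_D: "mem \<sigma> x y \<Longrightarrow> x \<in> D \<sigma> \<and> y \<in> D \<sigma>"
  using kripke unfolding kripke_structure_def by (elim conjE) fast

lemma mem_tr: "\<sigma> \<le> \<tau> \<Longrightarrow> mem \<sigma> x y \<Longrightarrow> mem \<tau> (tr \<sigma> \<tau> x) (tr \<sigma> \<tau> y)"
  using kripke unfolding kripke_structure_def by (elim conjE) fast

lemma extensionality:
  assumes "x \<in> D \<sigma>" "y \<in> D \<sigma>"
    and "\<And>\<tau> z. \<sigma> \<le> \<tau> \<Longrightarrow> z \<in> D \<tau> \<Longrightarrow> mem \<tau> z (tr \<sigma> \<tau> x) \<longleftrightarrow> mem \<tau> z (tr \<sigma> \<tau> y)"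
  shows "x = y"
  using kripke assms unfolding kripke_structure_def by (elim conjE) metis

lemma in_D_bot [simp]: "emp \<in> D bot" "hatP \<in> D bot" "one \<rho> \<in> D bot"
  using hatP unfolding contains_hatP_def by (elim conjE; blast)+

lemma one_at_in_D [simp]: "one_at \<tau> \<rho> \<in> D \<tau>"
  by simp

lemma mem_one_at: "mem \<tau> z (one_at \<tau> \<rho>) \<longleftrightarrow> \<not> \<tau> \<le> \<rho> \<and> z = tr bot \<tau> emp"
proof (cases "z \<in> D \<tau>")
  case True
  then show ?thesis
    using hatP not_le_iff_less_or_incompat[OF linear_below] unfolding contains_hatP_def by simp
next
  case False
  then show ?thesis using mem_in_D[of \<tau> z] by auto
qed

lemma mem_hatP_at: "mem \<tau> z (tr bot \<tau> hatP) \<longleftrightarrow> (\<exists>\<rho>. z = one_at \<tau> \<rho>)"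
proof (cases "z \<in> D \<tau>")
  case True
  then show ?thesis using hatP unfolding contains_hatP_def by simp
next
  case False
  then show ?thesis using mem_in_D[of \<tau> z] by auto
qed

lemma one_at_eq_if_not_le:
  assumes "\<not> \<tau> \<le> a" "\<not> \<tau> \<le> c"
  shows "one_at \<tau> a = one_at \<tau> c"
proof (rule extensionality)
  fix \<tau>' z assume "\<tau> \<le> \<tau>'"
  then have "\<not> \<tau>' \<le> a" "\<not> \<tau>' \<le> c" using assms order.trans by blast+
  then show "mem \<tau>' z (tr \<tau> \<tau>' (one_at \<tau> a)) \<longleftrightarrow> mem \<tau>' z (tr \<tau> \<tau>' (one_at \<tau> c))"
    using \<open>\<tau> \<le> \<tau>'\<close> by (simp add: mem_one_at)
qed simp_all

lemma forces_ball:
  assumes v: "\<forall>k. v k \<in> D \<tau>" and "i \<noteq> a"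
  shows "forced \<tau> v (FAll i (FImp (FMem i a) \<phi>)) \<longleftrightarrow>
    (\<forall>\<tau>'\<ge>\<tau>. \<forall>x\<in>D \<tau>'. mem \<tau>' x (tr \<tau> \<tau>' (v a)) \<longrightarrow> forced \<tau>' ((tr \<tau> \<tau>' \<circ> v)(i := x)) \<phi>)"
    (is "_ \<longleftrightarrow> ?ball")
proof -
  have shift: "tr \<tau>' \<tau>'' \<circ> (tr \<tau> \<tau>' \<circ> v)(i := x) = (tr \<tau> \<tau>'' \<circ> v)(i := tr \<tau>' \<tau>'' x)"
    if "\<tau> \<le> \<tau>'" "\<tau>' \<le> \<tau>''" for \<tau>' \<tau>'' x
    using that v by (auto simp: fun_eq_iff)
  have "forced \<tau> v (FAll i (FImp (FMem i a) \<phi>)) \<longleftrightarrow>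
    (\<forall>\<tau>'\<ge>\<tau>. \<forall>x\<in>D \<tau>'. \<forall>\<tau>''\<ge>\<tau>'. mem \<tau>'' (tr \<tau>' \<tau>'' x) (tr \<tau> \<tau>'' (v a)) \<longrightarrow>
       forced \<tau>'' ((tr \<tau> \<tau>'' \<circ> v)(i := tr \<tau>' \<tau>'' x)) \<phi>)"
    using \<open>i \<noteq> a\<close> by (simp add: shift)
  also have "\<dots> \<longleftrightarrow> ?ball"
  proof
    assume "\<forall>\<tau>'\<ge>\<tau>. \<forall>x\<in>D \<tau>'. \<forall>\<tau>''\<ge>\<tau>'. mem \<tau>'' (tr \<tau>' \<tau>'' x) (tr \<tau> \<tau>'' (v a)) \<longrightarrow>
       forced \<tau>'' ((tr \<tau> \<tau>'' \<circ> v)(i := tr \<tau>' \<tau>'' x)) \<phi>"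
    then show ?ball by (metis order.refl tr_refl)
  next
    assume ?ball
    then show "\<forall>\<tau>'\<ge>\<tau>. \<forall>x\<in>D \<tau>'. \<forall>\<tau>''\<ge>\<tau>'. mem \<tau>'' (tr \<tau>' \<tau>'' x) (tr \<tau> \<tau>'' (v a)) \<longrightarrow>
       forced \<tau>'' ((tr \<tau> \<tau>'' \<circ> v)(i := tr \<tau>' \<tau>'' x)) \<phi>"
      by (meson order.trans tr_in_D)
  qed
  finally show ?thesis .
qed

lemma forces_sub_fm_one:
  assumes "\<forall>k. w k \<in> D \<tau>" and "w i = one_at \<tau> a" "w j = one_at \<tau> b" "i \<noteq> 4" "j \<noteq> 4"
  shows "forced \<tau> w (sub_fm i j) \<longleftrightarrow> sub_one_at \<tau> a b"
proof -
  have "forced \<tau> w (sub_fm i j) \<longleftrightarrow>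
      (\<forall>\<tau>'\<ge>\<tau>. \<forall>x\<in>D \<tau>'. mem \<tau>' x (one_at \<tau>' a) \<longrightarrow> mem \<tau>' x (one_at \<tau>' b))"
    unfolding sub_fm_def by (subst forces_ball) (use assms in auto)
  also have "\<dots> \<longleftrightarrow> (\<forall>\<tau>'\<ge>\<tau>. \<not> \<tau>' \<le> a \<longrightarrow> \<not> \<tau>' \<le> b)"
    by (auto simp: mem_one_at)
  also have "\<dots> \<longleftrightarrow> sub_one_at \<tau> a b"
    unfolding sub_one_at_def by (meson order.refl order.trans)
  finally show ?thesis .
qed

end

locale branch_forcing = kripke_hatP D tr mem emp one hatP
    for D :: "'p::order_bot \<Rightarrow> 'a set" and tr mem emp one hatP +
  fixes \<sigma> :: 'p and B :: 'a
  assumes B_in_D: "B \<in> D \<sigma>"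
    and finite_below: "\<And>p :: 'p. finite {q. q \<le> p}"
    and no_maximal: "\<And>p :: 'p. \<exists>q. p < q"
begin

abbreviation member_at :: "'p \<Rightarrow> 'p \<Rightarrow> bool" where
  "member_at \<tau> \<rho> \<equiv> mem \<tau> (one_at \<tau> \<rho>) (tr \<sigma> \<tau> B)"

sublocale stage_family \<sigma> member_at
proof
  fix \<tau> \<tau>' a assume "\<sigma> \<le> \<tau>" "\<tau> \<le> \<tau>'" "member_at \<tau> a"
  have "mem \<tau>' (tr \<tau> \<tau>' (one_at \<tau> a)) (tr \<tau> \<tau>' (tr \<sigma> \<tau> B))"
    using \<open>\<tau> \<le> \<tau>'\<close> \<open>member_at \<tau> a\<close> by (rule mem_tr)
  then show "member_at \<tau>' a" using B_in_D \<open>\<sigma> \<le> \<tau>\<close> \<open>\<tau> \<le> \<tau>'\<close> by simp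
next
  fix \<tau> a c :: 'p assume "\<not> \<tau> \<le> a" "\<not> \<tau> \<le> c"
  then have "one_at \<tau> a = one_at \<tau> c" by (rule one_at_eq_if_not_le)
  then show "member_at \<tau> a \<longleftrightarrow> member_at \<tau> c" by simp
qed (fact linear_below finite_below no_maximal)+

definition B_sub_hatP :: bool where
  "B_sub_hatP \<longleftrightarrow> (\<forall>\<tau>\<ge>\<sigma>. \<forall>z. mem \<tau> z (tr \<sigma> \<tau> B) \<longrightarrow> (\<exists>\<rho>. z = one_at \<tau> \<rho>))"

definition admissible :: "'p \<Rightarrow> (nat \<Rightarrow> 'a) \<Rightarrow> bool" where
  "admissible \<tau> v \<longleftrightarrow> \<sigma> \<le> \<tau> \<and> (\<forall>k. v k \<in> D \<tau>) \<and> v 0 = tr \<sigma> \<tau> B \<and> v 1 = tr bot \<tau> hatP"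

lemma admissible_in_D: "admissible \<tau> v \<Longrightarrow> \<forall>k. v k \<in> D \<tau>"
  unfolding admissible_def by blast

lemma admissible_update:
  assumes "admissible \<tau> v" "\<tau> \<le> \<tau>'" "x \<in> D \<tau>'" "1 < i"
  shows "admissible \<tau>' ((tr \<tau> \<tau>' \<circ> v)(i := x))"
  using assms B_in_D unfolding admissible_def by (auto intro: order.trans)

lemma admissible_tr:
  assumes "admissible \<tau> v" "\<tau> \<le> \<tau>'"
  shows "admissible \<tau>' (tr \<tau> \<tau>' \<circ> v)"
  using assms B_in_D unfolding admissible_def by (auto intro: order.trans)

lemma forces_ball_hatP:
  assumes "admissible \<tau> v" "1 < i"
  shows "forced \<tau> v (FAll i (FImp (FMem i 1) \<phi>)) \<longleftrightarrow>
    (\<forall>\<tau>'\<ge>\<tau>. \<forall>a. forced \<tau>' ((tr \<tau> \<tau>' \<circ> v)(i := one_at \<tau>' a)) \<phi>)"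
proof -
  have "v 1 = tr bot \<tau> hatP" using assms(1) unfolding admissible_def by blast
  then have "forced \<tau> v (FAll i (FImp (FMem i 1) \<phi>)) \<longleftrightarrow>
      (\<forall>\<tau>'\<ge>\<tau>. \<forall>x\<in>D \<tau>'. (\<exists>a. x = one_at \<tau>' a) \<longrightarrow> forced \<tau>' ((tr \<tau> \<tau>' \<circ> v)(i := x)) \<phi>)"
    using assms by (subst forces_ball) (auto simp: admissible_in_D mem_hatP_at)
  also have "\<dots> \<longleftrightarrow> (\<forall>\<tau>'\<ge>\<tau>. \<forall>a. forced \<tau>' ((tr \<tau> \<tau>' \<circ> v)(i := one_at \<tau>' a)) \<phi>)"
    using one_at_in_D by blast
  finally show ?thesis .
qed

lemma forces_ball_B:
  assumes "admissible \<tau> v" B_sub_hatP "1 < i"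
  shows "forced \<tau> v (FAll i (FImp (FMem i 0) \<phi>)) \<longleftrightarrow>
    (\<forall>\<tau>'\<ge>\<tau>. \<forall>a. member_at \<tau>' a \<longrightarrow> forced \<tau>' ((tr \<tau> \<tau>' \<circ> v)(i := one_at \<tau>' a)) \<phi>)"
proof -
  have "\<sigma> \<le> \<tau>" "v 0 = tr \<sigma> \<tau> B" using assms(1) unfolding admissible_def by blast+
  then have "forced \<tau> v (FAll i (FImp (FMem i 0) \<phi>)) \<longleftrightarrow>
      (\<forall>\<tau>'\<ge>\<tau>. \<forall>x\<in>D \<tau>'. mem \<tau>' x (tr \<sigma> \<tau>' B) \<longrightarrow> forced \<tau>' ((tr \<tau> \<tau>' \<circ> v)(i := x)) \<phi>)"
    using assms B_in_D by (subst forces_ball) (auto simp: admissible_in_D)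
  also have "\<dots> \<longleftrightarrow>
      (\<forall>\<tau>'\<ge>\<tau>. \<forall>a. member_at \<tau>' a \<longrightarrow> forced \<tau>' ((tr \<tau> \<tau>' \<circ> v)(i := one_at \<tau>' a)) \<phi>)"
  proof -
    have "\<exists>\<rho>. x = one_at \<tau>' \<rho>" if "\<tau> \<le> \<tau>'" "mem \<tau>' x (tr \<sigma> \<tau>' B)" for \<tau>' x
      using assms(2) that \<open>\<sigma> \<le> \<tau>\<close> order.trans unfolding B_sub_hatP_def by blast
    then show ?thesis using one_at_in_D by blast
  qed
  finally show ?thesis .
qed

lemma forces_sub_fm_slots:
  assumes "admissible \<tau> u" "u i = one_at \<tau> a" "u j = one_at \<tau> b" "i \<noteq> 4" "j \<noteq> 4"
  shows "forced \<tau> u (sub_fm i j) \<longleftrightarrow> sub_one_at \<tau> a b"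
  using forces_sub_fm_one admissible_in_D assms by blast

lemma forces_B_sub_hatP_fm:
  assumes "admissible \<sigma> v"
  shows "forced \<sigma> v B_sub_hatP_fm \<longleftrightarrow> B_sub_hatP"
proof -
  have "v 0 = B" "v 1 = tr bot \<sigma> hatP" using assms B_in_D unfolding admissible_def by simp_all
  then have "forced \<sigma> v B_sub_hatP_fm \<longleftrightarrow>
      (\<forall>\<tau>\<ge>\<sigma>. \<forall>z\<in>D \<tau>. mem \<tau> z (tr \<sigma> \<tau> B) \<longrightarrow> (\<exists>\<rho>. z = one_at \<tau> \<rho>))"
    unfolding B_sub_hatP_fm_def using assms
    by (subst forces_ball) (auto simp: admissible_in_D mem_hatP_at)
  then show ?thesis unfolding B_sub_hatP_def using mem_in_D by blast
qed

lemma admissible_B: "admissible \<sigma> v \<Longrightarrow> v 0 = B"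
  unfolding admissible_def using B_in_D by simp

text \<open>These rewrite the clauses of \<open>branch_fm\<close> only if \<open>forces.simps(7)\<close> is removed, so
  that bounded quantifiers are not unfolded blindly, and \<open>One_nat_def\<close> too, which would turn
  the variable 1 into \<open>Suc 0\<close>.\<close>

lemmas forces_branch_simps =
  forces_ball_hatP forces_ball_B forces_sub_fm_slots admissible_update admissible_tr

lemma forces_down_closed_fm:
  assumes "admissible \<sigma> v" B_sub_hatP
  shows "forced \<sigma> v (FAll 2 (FImp (FMem 2 1) (FAll 3 (FImp (FMem 3 0) (FImp (sub_fm 3 2) (FMem 2 0))))))
    \<longleftrightarrow> branch_down_closed"
  using assms admissible_B[OF assms(1)] B_in_D unfolding branch_down_closed_iff
  by (simp add: forces_branch_simps del: forces.simps(7) One_nat_def) (meson order.refl order.trans)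

lemma forces_linear_fm:
  assumes "admissible \<sigma> v" B_sub_hatP
  shows "forced \<sigma> v (FAll 2 (FImp (FMem 2 0) (FAll 3 (FImp (FMem 3 0) (FOr (sub_fm 2 3) (sub_fm 3 2))))))
    \<longleftrightarrow> branch_linear"
  using assms admissible_B[OF assms(1)] B_in_D unfolding branch_linear_iff comparable_later_def
  by (simp add: forces_branch_simps del: forces.simps(7) One_nat_def)

lemma forces_maximal_fm:
  assumes "admissible \<sigma> v" B_sub_hatP
  shows "forced \<sigma> v (FAll 2 (FImp (FMem 2 1)
      (FImp (FAll 3 (FImp (FMem 3 0) (FOr (sub_fm 2 3) (sub_fm 3 2)))) (FMem 2 0))))
    \<longleftrightarrow> branch_maximal"
  using assms admissible_B[OF assms(1)] B_in_D unfolding branch_maximal_def comparable_later_def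
  by (simp add: forces_branch_simps del: forces.simps(7) One_nat_def) (meson order.refl order.trans)

end

theorem mainTheorem12:
  fixes D :: "'p::order_bot \<Rightarrow> 'a set"
    and tr :: "'p \<Rightarrow> 'p \<Rightarrow> 'a \<Rightarrow> 'a"
    and mem :: "'p \<Rightarrow> 'a \<Rightarrow> 'a \<Rightarrow> bool"
    and emp hatP B :: 'a and one :: "'p \<Rightarrow> 'a" and \<sigma> :: 'p
  assumes "omega_tree (UNIV :: 'p set)"
    and "splitting (UNIV :: 'p set)"
    and "kripke_structure D tr mem"
    and "contains_hatP D tr mem emp one hatP"
    and "B \<in> D \<sigma>"
  shows "forces D tr mem \<sigma> ((\<lambda>_. B)(1 := tr bot \<sigma> hatP)) branch_fm \<longleftrightarrow>
         (forces D tr mem \<sigma> ((\<lambda>_. B)(1 := tr bot \<sigma> hatP)) B_sub_hatP_fm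
          \<and> mem \<sigma> (tr bot \<sigma> (one bot)) B
          \<and> (\<forall>\<tau>\<ge>\<sigma>. tree_branch {\<rho>. \<tau> \<le> \<rho>} (ext_at tr mem one \<sigma> B \<tau>)))"
proof -
  interpret branch_forcing D tr mem emp one hatP \<sigma> B
    using assms omega_tree_linear_below omega_tree_finite_below splitting_no_maximal
    by unfold_locales blast+
  let ?v = "(\<lambda>_. B)(1 := tr bot \<sigma> hatP)"
  have v: "admissible \<sigma> ?v" unfolding admissible_def using assms(5) by simp
  have ext: "ext_at tr mem one \<sigma> B \<tau> = {\<rho>. \<tau> \<le> \<rho> \<and> member_at \<tau> \<rho>}" for \<tau>
    unfolding ext_at_def by blast
  have "forced \<sigma> ?v branch_fm \<longleftrightarrow>
      B_sub_hatP \<and> branch_down_closed \<and> branch_linear \<and> branch_maximal"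
    unfolding branch_fm_def B_sub_hatP_fm_def[symmetric]
    using forces_B_sub_hatP_fm[OF v] forces_down_closed_fm[OF v] forces_linear_fm[OF v]
      forces_maximal_fm[OF v]
    by (simp only: forces.simps(4)) blast
  also have "\<dots> \<longleftrightarrow> B_sub_hatP \<and> member_at \<sigma> bot \<and>
      (\<forall>\<tau>\<ge>\<sigma>. tree_branch {\<rho>. \<tau> \<le> \<rho>} {\<rho>. \<tau> \<le> \<rho> \<and> member_at \<tau> \<rho>})"
    using branch_conditions_iff_stage_branches by blast
  finally show ?thesis
    using forces_B_sub_hatP_fm[OF v] assms(5) by (simp add: ext)
qed

end
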